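(* Let $k,l\ge1$ be integers, $\mu>0$, $\lambda_1,\dots,\lambda_l>0$, $\Lambda=\sum_{m=1}^l\lambda_m$, $c_m=\lambda_m/\Lambda$, $\theta>0$, $\alpha\in(0,1)$, and $\psi_{\theta,\alpha}(z)=(z+\theta)^\alpha-\theta^\alpha$. Let $p_0(t)$ be the zero state-phase probability of the Erlang queue with multiple arrivals. Then for every $r\in\mathbb{N}_0$ and $z>0$, \begin{equation*} \int_{0}^{\infty}\int_{0}^{s}p_{0}(t)(s-t)^{r}e^{-(\Lambda+k\mu)(s-t)}e^{-s\psi_{\theta,\alpha}(z)}\,dt\,ds=\sum_{h=1}^{\infty}\sum_{w=0}^{\infty}\sum_{\substack{\mathbf m'\in\mathbb N_0^l\\ m'_1+\dots+m'_l=w}}\frac{C_{h,w}^{0}(\mathbf{m}')\,\Gamma(r+1)}{(\Lambda+k\mu+\psi_{\theta,\alpha}(z))^{\gamma_{h,w}^{0}(\mathbf{m}')+r+1}}. \end{equation*}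
   Context: Erlang queue with multiple arrivals: $\{\mathcal{Q}(t)\}_{t\ge0}$ is the continuous-time Markov chain on $\{(0,0)\}\cup S$, $S=\{(n,s)\in\mathbb{N}\times\mathbb{N}: n\ge1,\ 1\le s\le k\}$, started at $(0,0)$, with transition rates: $(0,0)\to(m,k)$ at rate $\lambda_m$; $(n,s)\to(n+m,s)$ at rate $\lambda_m$ ($m=1,\dots,l$); $(n,s)\to(n,s-1)$ at rate $k\mu$ for $s\ge2$; $(n,1)\to(n-1,k)$ at rate $k\mu$ for $n\ge2$; $(1,1)\to(0,0)$ at rate $k\mu$. $p_0(t)=\Pr(\mathcal Q(t)=(0,0)\mid\mathcal Q(0)=(0,0))$. Notation: for $h\ge1$, $w\ge0$, $\mathbf m'\in\mathbb N_0^l$: $\gamma_{h,w}^{0}(\mathbf{m}')=h+w+k\sum_{j=1}^{l}jm'_{j}$ and $C_{h,w}^{0}(\mathbf{m}')=h\Lambda^{w}\Big(\prod_{i=1}^{l}\frac{c_{i}^{m'_{i}}}{m'_{i}!}\Big)\frac{(k\mu)^{\gamma_{h,w}^{0}(\mathbf{m}')-w-1}}{(\gamma_{h,w}^{0}(\mathbf{m}')-w)!}(\gamma_{h,w}^{0}(\mathbf{m}')-1)!$. *)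

theory Defs
  imports "HOL-Analysis.Analysis"
begin

text \<open>States of the Erlang queue: (0,0) and (n,s) with n \<ge> 1, 1 \<le> s \<le> k.\<close>
type_synonym qstate = "nat \<times> nat"

definition Lam :: "nat \<Rightarrow> (nat \<Rightarrow> real) \<Rightarrow> real" where
  "Lam l lam = (\<Sum>m=1..l. lam m)"

definition jumps :: "nat \<Rightarrow> nat \<Rightarrow> real \<Rightarrow> (nat \<Rightarrow> real) \<Rightarrow> qstate \<Rightarrow> (qstate \<times> real) list" where
  "jumps k l mu lam x = (case x of (n, s) \<Rightarrow>
     if n = 0 then
       (if s = 0 then map (\<lambda>m. ((m, k), lam m)) [1..<l+1] else [])
     else if 1 \<le> s \<and> s \<le> k then
       map (\<lambda>m. ((n + m, s), lam m)) [1..<l+1] @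
       [(if s \<ge> 2 then (n, s - 1) else if n \<ge> 2 then (n - 1, k) else (0, 0), real k * mu)]
     else [])"

text \<open>n-step transition probabilities of the uniformized chain (uniformization rate Lambda + k mu).\<close>
fun kpow :: "nat \<Rightarrow> nat \<Rightarrow> real \<Rightarrow> (nat \<Rightarrow> real) \<Rightarrow> nat \<Rightarrow> qstate \<Rightarrow> qstate \<Rightarrow> real" where
  "kpow k l mu lam 0 x y = (if x = y then 1 else 0)"
| "kpow k l mu lam (Suc n) x y =
     (let q = Lam l lam + real k * mu; js = jumps k l mu lam x in
      (1 - sum_list (map snd js) / q) * kpow k l mu lam n x y
      + sum_list (map (\<lambda>(z, r). r / q * kpow k l mu lam n z y) js))"

text \<open>p_0(t) = Pr(Q(t) = (0,0) | Q(0) = (0,0)), via the uniformization representation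
  of the transition function exp(tQ) of the bounded-rate chain.\<close>
definition p0 :: "nat \<Rightarrow> nat \<Rightarrow> real \<Rightarrow> (nat \<Rightarrow> real) \<Rightarrow> real \<Rightarrow> real" where
  "p0 k l mu lam t = (let q = Lam l lam + real k * mu in
     (\<Sum>n. exp (- q * t) * (q * t) ^ n / fact n * kpow k l mu lam n (0, 0) (0, 0)))"

definition psi :: "real \<Rightarrow> real \<Rightarrow> real \<Rightarrow> real" where
  "psi theta alpha z = (z + theta) powr alpha - theta powr alpha"

definition comps :: "nat \<Rightarrow> nat \<Rightarrow> (nat \<Rightarrow> nat) set" where
  "comps l w = {m. (\<forall>i. i \<notin> {1..l} \<longrightarrow> m i = 0) \<and> (\<Sum>i=1..l. m i) = w}"

definition gamma0 :: "nat \<Rightarrow> nat \<Rightarrow> nat \<Rightarrow> nat \<Rightarrow> (nat \<Rightarrow> nat) \<Rightarrow> nat" where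
  "gamma0 k l h w m = h + w + k * (\<Sum>j=1..l. j * m j)"

definition C0 :: "nat \<Rightarrow> nat \<Rightarrow> real \<Rightarrow> (nat \<Rightarrow> real) \<Rightarrow> nat \<Rightarrow> nat \<Rightarrow> (nat \<Rightarrow> nat) \<Rightarrow> real" where
  "C0 k l mu lam h w m = (let g = gamma0 k l h w m in
     real h * Lam l lam ^ w * (\<Prod>i=1..l. (lam i / Lam l lam) ^ m i / fact (m i))
     * (real k * mu) ^ (g - w - 1) / fact (g - w) * fact (g - 1))"

end

theory Submission
  imports Defs "HOL-Probability.Distributions"
begin

(* Uniformizing at rate q = Lambda + k mu writes p0(t) = exp(-q t) * sum_N a_N t^N / N!, where a_N
   is the total rate weight of the N-step paths of the uniformized chain from (0,0) back to (0,0).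
   On the levels (n - 1) k + s that chain is a random walk which moves down by one (its self-loop
   at (0,0) playing the down step from level 0) or up by j k, so a_N obeys the first-step
   recursion of that walk.  The same recursion is satisfied by a ballot-type formula: N!/(k mu)
   times the sum, over the step counts m of N + 1 steps with positive net descent d(m), of
   d(m) prod_i rate_i^m_i / m_i!.  Integrating termwise over the triangle 0 <= t <= s turns the
   left-hand side into sum_N a_N r! / (q + psi)^(N + r + 2); indexing the step counts by their net
   descent h + 1 and their arrival counts m' (so that N + 1 = gamma) gives the right-hand side. *)

section \<open>Termwise integration over a triangle\<close>

lemma nn_integral_power_times_exp_Ici_scaled:
  fixes b :: real
  assumes b: "b > 0"
  shows "(\<integral>\<^sup>+x. ennreal (indicator {0..} x * x ^ n * exp (- b * x)) \<partial>lborel) = ennreal (fact n / b ^ Suc n)"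
proof -
  have "(\<integral>\<^sup>+x. ennreal (indicator {0..} x * x ^ n * exp (- b * x)) \<partial>lborel)
      = ennreal \<bar>1 / b\<bar> * (\<integral>\<^sup>+y. ennreal (indicator {0..} (0 + 1 / b * y) * (0 + 1 / b * y) ^ n
          * exp (- b * (0 + 1 / b * y))) \<partial>lborel)"
    using b by (intro nn_integral_real_affine) auto
  also have "(\<integral>\<^sup>+y. ennreal (indicator {0..} (0 + 1 / b * y) * (0 + 1 / b * y) ^ n
          * exp (- b * (0 + 1 / b * y))) \<partial>lborel)
      = (\<integral>\<^sup>+y. ennreal (1 / b ^ n) * (ennreal (y ^ n * exp (- y)) * indicator {0..} y) \<partial>lborel)"
    using b by (intro nn_integral_cong)
      (auto split: split_indicator simp: ennreal_mult'[symmetric] power_divide zero_le_divide_iff)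
  also have "\<dots> = ennreal (1 / b ^ n) * ennreal (fact n)"
    by (subst nn_integral_cmult) (auto simp: nn_intergal_power_times_exp_Ici)
  finally show ?thesis
    using b by (simp add: ennreal_mult'[symmetric] ennreal_of_nat_eq_real_of_nat ennreal_mult[symmetric])
qed

lemma borel_measurable_indicator_triangle[measurable]:
  "(\<lambda>(s::real, t::real). indicator {0..s} t :: real) \<in> borel_measurable (lborel \<Otimes>\<^sub>M lborel)"
proof -
  have "(\<lambda>(s::real, t::real). indicator {0..s} t :: real) = (\<lambda>x. if 0 \<le> snd x \<and> snd x \<le> fst x then 1 else 0)"
    by (auto simp: fun_eq_iff split: split_indicator)
  then show ?thesis by simp
qed

lemma nn_integral_triangle_power_exp:
  fixes b :: real
  assumes b: "b > 0"
  shows "(\<integral>\<^sup>+s. (\<integral>\<^sup>+t. ennreal (indicator {0..} s * indicator {0..s} t * t ^ N * (s - t) ^ r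
            * exp (- b * s)) \<partial>lborel) \<partial>lborel) = ennreal (fact N * fact r / b ^ (N + r + 2))"
proof -
  define f where "f t s = ennreal (indicator {0..} s * indicator {0..s} t * t ^ N * (s - t) ^ r * exp (- b * s))"
    for t s :: real
  have [measurable]: "(\<lambda>(t, s). f t s) \<in> borel_measurable (lborel \<Otimes>\<^sub>M lborel)"
  proof -
    have "(\<lambda>(s, t). f t s) \<in> borel_measurable (lborel \<Otimes>\<^sub>M lborel)"
      unfolding f_def by measurable
    from measurable_pair_swap[OF this] show ?thesis by simp
  qed
  have inner: "(\<integral>\<^sup>+s. f t s \<partial>lborel)
      = ennreal (fact r / b ^ Suc r) * ennreal (indicator {0..} t * t ^ N * exp (- b * t))" for t
  proof (cases "t \<ge> 0")
    case True
    have "(\<integral>\<^sup>+s. f t s \<partial>lborel) = (\<integral>\<^sup>+u. f t (t + 1 * u) \<partial>lborel)"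
      using nn_integral_real_affine[of "f t" 1 t] by (simp add: f_def)
    also have "\<dots> = (\<integral>\<^sup>+u. ennreal (t ^ N * exp (- b * t))
        * ennreal (indicator {0..} u * u ^ r * exp (- b * u)) \<partial>lborel)"
      using True by (intro nn_integral_cong)
        (auto split: split_indicator simp: f_def ennreal_mult'[symmetric] exp_add[symmetric] algebra_simps)
    also have "\<dots> = ennreal (t ^ N * exp (- b * t)) * ennreal (fact r / b ^ Suc r)"
      by (subst nn_integral_cmult) (use nn_integral_power_times_exp_Ici_scaled[OF b, of r] in auto)
    finally show ?thesis using True by (simp add: mult.commute)
  qed (simp add: f_def indicator_def)
  have "(\<integral>\<^sup>+s. (\<integral>\<^sup>+t. f t s \<partial>lborel) \<partial>lborel) = (\<integral>\<^sup>+t. (\<integral>\<^sup>+s. f t s \<partial>lborel) \<partial>lborel)"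
    by (rule lborel_pair.Fubini') measurable
  also have "\<dots> = ennreal (fact r / b ^ Suc r) * ennreal (fact N / b ^ Suc N)"
    unfolding inner by (subst nn_integral_cmult) (use nn_integral_power_times_exp_Ici_scaled[OF b, of N] in auto)
  also have "\<dots> = ennreal (fact N * fact r / b ^ (N + r + 2))"
    using b by (simp add: ennreal_mult'[symmetric] ennreal_mult[symmetric] power_add field_simps)
  finally show ?thesis by (simp add: f_def)
qed

lemma set_integral_triangle_eq_nn_integral:
  fixes f :: "real \<Rightarrow> real \<Rightarrow> real"
  assumes [measurable]: "(\<lambda>(s, t). f s t) \<in> borel_measurable (lborel \<Otimes>\<^sub>M lborel)"
    and nonneg: "\<And>s t. 0 \<le> t \<Longrightarrow> t \<le> s \<Longrightarrow> 0 \<le> f s t"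
    and nn: "(\<integral>\<^sup>+s. (\<integral>\<^sup>+t. ennreal (indicator {0..} s * indicator {0..s} t * f s t) \<partial>lborel) \<partial>lborel)
             = ennreal c"
    and "0 \<le> c"
  shows "(LINT s:{0..}|lborel. (LINT t:{0..s}|lborel. f s t)) = c"
proof -
  define I where "I s = (\<integral>\<^sup>+t. ennreal (indicator {0..} s * indicator {0..s} t * f s t) \<partial>lborel)" for s
  define J where "J s = (LINT t:{0..s}|lborel. f s t)" for s
  have [measurable]: "I \<in> borel_measurable lborel" "J \<in> borel_measurable lborel"
    unfolding I_def J_def set_lebesgue_integral_def by measurable
  have J_nonneg: "0 \<le> s \<Longrightarrow> 0 \<le> J s" for s
    unfolding J_def set_lebesgue_integral_def
    by (intro integral_nonneg_AE AE_I2) (auto simp: indicator_def nonneg)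
  have "AE s in lborel. I s \<noteq> \<infinity>"
    by (rule nn_integral_PInf_AE) (use nn in \<open>auto simp: I_def\<close>)
  then have "AE s in lborel. ennreal (indicator {0..} s * J s) = I s"
  proof (rule eventually_mono)
    fix s assume finite: "I s \<noteq> \<infinity>"
    show "ennreal (indicator {0..} s * J s) = I s"
    proof (cases "0 \<le> s")
      case True
      have "J s = enn2real (\<integral>\<^sup>+t. ennreal (indicator {0..s} t *\<^sub>R f s t) \<partial>lborel)"
        unfolding J_def set_lebesgue_integral_def
        by (rule integral_eq_nn_integral) (auto simp: indicator_def nonneg intro!: AE_I2)
      also have "\<dots> = enn2real (I s)"
        unfolding I_def using True by (simp add: indicator_def)
      finally show ?thesis using True finite by (simp add: ennreal_enn2real less_top)
    qed (simp add: I_def indicator_def)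
  qed
  then have "(\<integral>\<^sup>+s. ennreal (indicator {0..} s * J s) \<partial>lborel) = ennreal c"
    using nn by (simp add: nn_integral_cong_AE I_def)
  then have "integral\<^sup>L lborel (\<lambda>s. indicator {0..} s * J s) = c"
    using \<open>0 \<le> c\<close> by (subst (asm) nn_integral_eq_integrable) (auto simp: indicator_def J_nonneg)
  then show ?thesis unfolding J_def set_lebesgue_integral_def by simp
qed

lemma summable_dominated_by_exp_series:
  fixes c :: "nat \<Rightarrow> real"
  assumes "\<And>N. \<bar>c N\<bar> \<le> C * q ^ N / fact N"
  shows "summable (\<lambda>N. c N * t ^ N)"
proof (rule summable_comparison_test)
  show "summable (\<lambda>N. C * ((q * \<bar>t\<bar>) ^ N /\<^sub>R fact N))"
    by (intro summable_mult summable_exp_generic)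
  have "\<bar>c N\<bar> * \<bar>t\<bar> ^ N \<le> C * q ^ N / fact N * \<bar>t\<bar> ^ N" for N
    by (rule mult_right_mono[OF assms]) simp
  then show "\<exists>N0. \<forall>N\<ge>N0. norm (c N * t ^ N) \<le> C * ((q * \<bar>t\<bar>) ^ N /\<^sub>R fact N)"
    by (simp add: abs_mult power_abs power_mult_distrib divide_inverse mult_ac)
qed

lemma nn_integral_triangle_power_series:
  fixes c :: "nat \<Rightarrow> real"
  assumes "0 < b" and c_nonneg: "\<And>N. 0 \<le> c N"
    and summable_c: "\<And>t. summable (\<lambda>N. c N * t ^ N)"
    and summable_a: "summable (\<lambda>N. c N * fact N * fact r / b ^ (N + r + 2))"
  shows "(\<integral>\<^sup>+s. (\<integral>\<^sup>+t. ennreal (indicator {0..} s * indicator {0..s} t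
            * ((\<Sum>N. c N * t ^ N) * (s - t) ^ r * exp (- b * s))) \<partial>lborel) \<partial>lborel)
       = ennreal (\<Sum>N. c N * fact N * fact r / b ^ (N + r + 2))"
proof -
  define g where "g N s t = ennreal (indicator {0..} s * indicator {0..s} t * t ^ N * (s - t) ^ r * exp (- b * s))"
    for N and s t :: real
  have [measurable]: "(\<lambda>(s, t). g N s t) \<in> borel_measurable (lborel \<Otimes>\<^sub>M lborel)" for N
    unfolding g_def by measurable
  have pointwise: "ennreal (indicator {0..} s * indicator {0..s} t
        * ((\<Sum>N. c N * t ^ N) * (s - t) ^ r * exp (- b * s))) = (\<Sum>N. ennreal (c N) * g N s t)" for s t
  proof (cases "0 \<le> t \<and> t \<le> s")
    case True
    have "(\<Sum>N. c N * t ^ N) * ((s - t) ^ r * exp (- b * s)) = (\<Sum>N. c N * t ^ N * ((s - t) ^ r * exp (- b * s)))"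
      by (simp add: suminf_mult2 summable_c)
    also have "ennreal \<dots> = (\<Sum>N. ennreal (c N * t ^ N * ((s - t) ^ r * exp (- b * s))))"
      using True c_nonneg by (intro suminf_ennreal2[symmetric] summable_mult2 summable_c) auto
    finally show ?thesis
      using True c_nonneg by (simp add: g_def ennreal_mult'[symmetric] mult_ac)
  qed (auto simp: g_def indicator_def)
  have "(\<integral>\<^sup>+s. (\<integral>\<^sup>+t. ennreal (indicator {0..} s * indicator {0..s} t
           * ((\<Sum>N. c N * t ^ N) * (s - t) ^ r * exp (- b * s))) \<partial>lborel) \<partial>lborel)
      = (\<Sum>N. ennreal (c N) * (\<integral>\<^sup>+s. (\<integral>\<^sup>+t. g N s t \<partial>lborel) \<partial>lborel))"
    unfolding pointwise by (simp add: nn_integral_suminf nn_integral_cmult)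
  also have "\<dots> = (\<Sum>N. ennreal (c N * fact N * fact r / b ^ (N + r + 2)))"
    unfolding g_def nn_integral_triangle_power_exp[OF \<open>0 < b\<close>]
    using \<open>0 < b\<close> c_nonneg by (simp add: ennreal_mult'[symmetric] mult.assoc)
  also have "\<dots> = ennreal (\<Sum>N. c N * fact N * fact r / b ^ (N + r + 2))"
    using summable_a c_nonneg \<open>0 < b\<close> by (intro suminf_ennreal2) auto
  finally show ?thesis .
qed

lemma set_integral_triangle_power_series:
  fixes c :: "nat \<Rightarrow> real"
  assumes "0 < b" and c_nonneg: "\<And>N. 0 \<le> c N"
    and summable_c: "\<And>t. summable (\<lambda>N. c N * t ^ N)"
    and summable_a: "summable (\<lambda>N. c N * fact N * fact r / b ^ (N + r + 2))"
  shows "(LINT s:{0..}|lborel. (LINT t:{0..s}|lborel. (\<Sum>N. c N * t ^ N) * (s - t) ^ r * exp (- b * s)))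
       = (\<Sum>N. c N * fact N * fact r / b ^ (N + r + 2))"
proof (rule set_integral_triangle_eq_nn_integral)
  show "(\<lambda>(s, t). (\<Sum>N. c N * t ^ N) * (s - t) ^ r * exp (- b * s)) \<in> borel_measurable (lborel \<Otimes>\<^sub>M lborel)"
    by measurable
  show "0 \<le> (\<Sum>N. c N * t ^ N) * (s - t) ^ r * exp (- b * s)" if "0 \<le> t" "t \<le> s" for s t
    using that c_nonneg summable_c by (intro mult_nonneg_nonneg suminf_nonneg) auto
  show "0 \<le> (\<Sum>N. c N * fact N * fact r / b ^ (N + r + 2))"
    using summable_a c_nonneg \<open>0 < b\<close> by (intro suminf_nonneg) auto
qed (rule nn_integral_triangle_power_series[OF assms])

section \<open>Rearranging nonnegative double series\<close>

lemma has_sum_Sigma_finite_blocks: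
  fixes f :: "nat \<times> 'a \<Rightarrow> real"
  assumes finite: "\<And>N. finite (B N)" and nonneg: "\<And>N m. m \<in> B N \<Longrightarrow> 0 \<le> f (N, m)"
    and block: "\<And>N. (\<Sum>m\<in>B N. f (N, m)) = a N" and "summable a"
  shows "(f has_sum suminf a) (Sigma UNIV B)"
proof -
  have blocks: "((\<lambda>m. f (N, m)) has_sum a N) (B N)" for N
    using block[of N] finite by (simp add: has_sum_finiteI)
  have a_nonneg: "0 \<le> a N" for N
    unfolding block[symmetric] by (intro sum_nonneg nonneg)
  have "(a has_sum suminf a) UNIV"
    using \<open>summable a\<close> a_nonneg by (intro sums_nonneg_imp_has_sum summable_sums)
  moreover have "f summable_on Sigma UNIV B"
    using blocks \<open>summable a\<close> a_nonneg nonneg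
    by (intro summable_on_SigmaI[where g = a]) (auto simp: summable_on_UNIV_nonneg_real_iff)
  ultimately show ?thesis
    using blocks by (intro has_sum_SigmaI) auto
qed

lemma iterated_suminf_eq_has_sum:
  fixes f :: "(nat \<times> nat) \<times> 'a \<Rightarrow> real"
  assumes sum: "(f has_sum S) (Sigma UNIV (\<lambda>(h, w). B h w))" and finite: "\<And>h w. finite (B h w)"
  shows "(\<Sum>h. \<Sum>w. \<Sum>m\<in>B h w. f ((h, w), m)) = S"
proof -
  define b where "b h w = (\<Sum>m\<in>B h w. f ((h, w), m))" for h w
  have "((\<lambda>(h, w). b h w) has_sum S) UNIV"
    using finite by (intro has_sum_SigmaD[OF sum]) (auto simp: b_def has_sum_finiteI)
  then have pairs: "((\<lambda>(h, w). b h w) has_sum S) (Sigma UNIV (\<lambda>_. UNIV))"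
    by simp
  have "(b h has_sum suminf (b h)) UNIV" for h
  proof -
    have "b h summable_on UNIV"
      using summable_on_SigmaD1[OF has_sum_imp_summable[OF pairs]] by simp
    then have "(b h has_sum infsum (b h) UNIV) UNIV" by (rule has_sum_infsum)
    moreover from this have "suminf (b h) = infsum (b h) UNIV"
      by (metis has_sum_imp_sums sums_unique)
    ultimately show ?thesis by simp
  qed
  then have "((\<lambda>h. suminf (b h)) has_sum S) UNIV"
    by (intro has_sum_SigmaD[OF pairs]) simp
  then show ?thesis
    unfolding b_def[symmetric] by (metis has_sum_imp_sums sums_unique)
qed

section \<open>Compositions and multinomial weights\<close>

definition compositions :: "'a set \<Rightarrow> nat \<Rightarrow> ('a \<Rightarrow> nat) set" where
  "compositions I n = {m. (\<forall>i. i \<notin> I \<longrightarrow> m i = 0) \<and> sum m I = n}"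

definition multinomial_weight :: "('a \<Rightarrow> real) \<Rightarrow> 'a set \<Rightarrow> ('a \<Rightarrow> nat) \<Rightarrow> real" where
  "multinomial_weight \<beta> I m = (\<Prod>i\<in>I. \<beta> i ^ m i / fact (m i))"

lemma comps_eq_compositions: "comps l w = compositions {1..l} w"
  by (simp add: comps_def compositions_def)

lemma compositions_le:
  assumes "finite I" "m \<in> compositions I n"
  shows "m i \<le> n"
  using assms member_le_sum[of i I m] by (cases "i \<in> I") (auto simp: compositions_def)

lemma finite_compositions:
  assumes "finite I"
  shows "finite (compositions I n)"
proof -
  have "compositions I n \<subseteq> (\<lambda>f i. if i \<in> I then f i else 0) ` (I \<rightarrow>\<^sub>E {..n})"
  proof
    fix m assume m: "m \<in> compositions I n"
    then have "restrict m I \<in> I \<rightarrow>\<^sub>E {..n}"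
      using compositions_le[OF assms] by auto
    moreover have "m = (\<lambda>i. if i \<in> I then restrict m I i else 0)"
      using m by (auto simp: compositions_def fun_eq_iff)
    ultimately show "m \<in> (\<lambda>f i. if i \<in> I then f i else 0) ` (I \<rightarrow>\<^sub>E {..n})" by blast
  qed
  then show ?thesis
    using assms by (rule finite_subset[OF _ finite_imageI[OF finite_PiE]]) auto
qed

lemma compositions_0: "finite I \<Longrightarrow> compositions I 0 = {\<lambda>_. 0}"
  by (auto simp: compositions_def fun_eq_iff)

lemma sum_of_nat_composition: "finite I \<Longrightarrow> m \<in> compositions I n \<Longrightarrow> (\<Sum>i\<in>I. real (m i)) = real n"
  by (simp add: compositions_def flip: of_nat_sum)

lemma compositions_Suc_image:
  assumes "finite I" "i \<in> I"
  shows "(\<lambda>m. m(i := Suc (m i))) ` compositions I n = {m \<in> compositions I (Suc n). 0 < m i}"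
proof (intro equalityI subsetI)
  fix m' assume "m' \<in> (\<lambda>m. m(i := Suc (m i))) ` compositions I n"
  then obtain m where m: "m \<in> compositions I n" and m': "m' = m(i := Suc (m i))" by auto
  have "sum m' I = Suc (sum m I)"
    unfolding m' using assms by (simp add: sum.remove[of I i])
  with m m' assms show "m' \<in> {m \<in> compositions I (Suc n). 0 < m i}"
    by (auto simp: compositions_def)
next
  fix m' assume m': "m' \<in> {m \<in> compositions I (Suc n). 0 < m i}"
  define m where "m = m'(i := m' i - 1)"
  have m'_eq: "m' = m(i := Suc (m i))"
    using m' by (auto simp: m_def fun_eq_iff)
  have "sum m' I = Suc (sum m I)"
    using assms by (subst m'_eq) (simp add: sum.remove[of I i])
  then have "m \<in> compositions I n"
    using m' assms by (auto simp: compositions_def m_def)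
  with m'_eq show "m' \<in> (\<lambda>m. m(i := Suc (m i))) ` compositions I n" by blast
qed

lemma multinomial_weight_Suc:
  assumes "finite I" "i \<in> I"
  shows "multinomial_weight \<beta> I (m(i := Suc (m i))) * real (Suc (m i)) = multinomial_weight \<beta> I m * \<beta> i"
proof -
  define R where "R = (\<Prod>j\<in>I - {i}. \<beta> j ^ m j / fact (m j))"
  have old: "multinomial_weight \<beta> I m = \<beta> i ^ m i / fact (m i) * R"
    unfolding multinomial_weight_def R_def using assms by (subst prod.remove[of _ i]) auto
  have new: "multinomial_weight \<beta> I (m(i := Suc (m i))) = \<beta> i ^ Suc (m i) / fact (Suc (m i)) * R"
    unfolding multinomial_weight_def R_def using assms by (subst prod.remove[of _ i]) (auto intro!: prod.cong)
  have "(fact (Suc (m i)) :: real) = real (Suc (m i)) * fact (m i)"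
    by (simp add: fact_Suc)
  then show ?thesis
    unfolding old new by (simp add: field_simps del: of_nat_Suc)
qed

lemma multinomial_weight_nonneg: "(\<And>i. i \<in> I \<Longrightarrow> 0 \<le> \<beta> i) \<Longrightarrow> 0 \<le> multinomial_weight \<beta> I m"
  unfolding multinomial_weight_def by (intro prod_nonneg divide_nonneg_pos) auto

text \<open>Each composition \<open>m\<close> of \<open>n + 1\<close> with \<open>m i > 0\<close> arises from exactly one composition of
  \<open>n\<close> by adding a step of type \<open>i\<close>, and \<open>multinomial_weight_Suc\<close> turns the weight \<open>\<beta> i\<close> of
  that step into the factor \<open>m i\<close>.\<close>
lemma sum_compositions_Suc:
  assumes "finite I"
  shows "(\<Sum>m\<in>compositions I n. multinomial_weight \<beta> I m * (\<Sum>i\<in>I. \<beta> i * c i * g (m(i := Suc (m i)))))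
       = (\<Sum>m\<in>compositions I (Suc n). multinomial_weight \<beta> I m * g m * (\<Sum>i\<in>I. c i * real (m i)))"
proof -
  let ?W = "multinomial_weight \<beta> I"
  have per_type: "(\<Sum>m\<in>compositions I n. ?W m * \<beta> i * c i * g (m(i := Suc (m i))))
      = (\<Sum>m\<in>compositions I (Suc n). ?W m * g m * (c i * real (m i)))" if i: "i \<in> I" for i
  proof -
    let ?u = "\<lambda>m. m(i := Suc (m i))"
    have "inj_on ?u (compositions I n)"
      by (rule inj_onI) (metis fun_upd_same fun_upd_upd fun_upd_triv nat.inject)
    have "(\<Sum>m\<in>compositions I n. ?W m * \<beta> i * c i * g (?u m))
        = (\<Sum>m\<in>compositions I n. ?W (?u m) * g (?u m) * (c i * real (?u m i)))"
      using i assms by (intro sum.cong refl) (simp add: multinomial_weight_Suc[symmetric])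
    also have "\<dots> = (\<Sum>m\<in>?u ` compositions I n. ?W m * g m * (c i * real (m i)))"
      using \<open>inj_on ?u (compositions I n)\<close> by (simp add: sum.reindex)
    also have "\<dots> = (\<Sum>m\<in>compositions I (Suc n). ?W m * g m * (c i * real (m i)))"
      using i assms by (subst compositions_Suc_image) (auto intro!: sum.mono_neutral_left finite_compositions)
    finally show ?thesis .
  qed
  have "(\<Sum>m\<in>compositions I n. ?W m * (\<Sum>i\<in>I. \<beta> i * c i * g (m(i := Suc (m i)))))
      = (\<Sum>i\<in>I. \<Sum>m\<in>compositions I n. ?W m * \<beta> i * c i * g (m(i := Suc (m i))))"
    by (subst sum.swap) (simp add: sum_distrib_left mult.assoc)
  also have "\<dots> = (\<Sum>i\<in>I. \<Sum>m\<in>compositions I (Suc n). ?W m * g m * (c i * real (m i)))"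
    using per_type by simp
  also have "\<dots> = (\<Sum>m\<in>compositions I (Suc n). ?W m * g m * (\<Sum>i\<in>I. c i * real (m i)))"
    by (subst sum.swap) (simp add: sum_distrib_left)
  finally show ?thesis .
qed

lemma sum_compositions_1:
  assumes "finite I"
  shows "(\<Sum>m\<in>compositions I 1. g m * multinomial_weight \<beta> I m) = (\<Sum>i\<in>I. \<beta> i * g ((\<lambda>_. 0)(i := 1)))"
  using sum_compositions_Suc[OF assms, where n = 0 and c = "\<lambda>_. 1"] assms
  by (simp add: compositions_0 multinomial_weight_def sum_of_nat_composition fun_upd_def mult.commute
      cong: sum.cong)

lemma sum_multinomial_weight:
  assumes "finite I"
  shows "(\<Sum>m\<in>compositions I n. multinomial_weight \<beta> I m) = sum \<beta> I ^ n / fact n"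
proof (induction n)
  case 0
  show ?case using assms by (simp add: compositions_0 multinomial_weight_def)
next
  case (Suc n)
  have "real (Suc n) * (\<Sum>m\<in>compositions I (Suc n). multinomial_weight \<beta> I m)
      = (\<Sum>m\<in>compositions I n. multinomial_weight \<beta> I m * (\<Sum>i\<in>I. \<beta> i * 1 * 1))"
    using sum_compositions_Suc[OF assms, where c = "\<lambda>_. 1" and g = "\<lambda>_. 1"] assms
    by (simp add: sum_of_nat_composition sum_distrib_left mult.commute cong: sum.cong)
  also have "\<dots> = sum \<beta> I * (\<Sum>m\<in>compositions I n. multinomial_weight \<beta> I m)"
    by (simp add: sum_distrib_left mult.commute)
  also have "\<dots> = sum \<beta> I * (sum \<beta> I ^ n / fact n)"
    using Suc by simp
  finally show ?case
    by (simp add: fact_Suc field_simps del: of_nat_Suc)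
qed

section \<open>A ballot formula for skip-free random walks\<close>

text \<open>A step of type 0 moves the walk down by one (at level 0 it stays put), a step of type
  \<open>i \<in> {1..l}\<close> moves it up by \<open>jump i\<close>; \<open>rate i\<close> is the weight of a step of type \<open>i\<close>.\<close>
locale skip_free_walk =
  fixes l :: nat and rate :: "nat \<Rightarrow> real" and jump :: "nat \<Rightarrow> nat"
  assumes rate_down_pos: "0 < rate 0" and rate_up_nonneg: "\<And>i. i \<in> {1..l} \<Longrightarrow> 0 \<le> rate i"
begin

definition displacement :: "nat \<Rightarrow> int" where
  "displacement i = (if i = 0 then -1 else int (jump i))"

definition descent :: "(nat \<Rightarrow> nat) \<Rightarrow> int" where
  "descent m = - (\<Sum>i\<le>l. displacement i * int (m i))"

definition descent_above :: "int \<Rightarrow> (nat \<Rightarrow> nat) \<Rightarrow> real" where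
  "descent_above x m = (if x < descent m then real_of_int (descent m) else 0)"

text \<open>The total weight of the \<open>N\<close>-step paths from level \<open>W\<close> to level 0, in ballot form over
  the step counts of \<open>N + 1\<close> steps; it is checked against the first-step recursion rather than
  derived combinatorially.\<close>
definition paths_to_zero :: "nat \<Rightarrow> nat \<Rightarrow> real" where
  "paths_to_zero N W = fact N / rate 0
     * (\<Sum>m\<in>compositions {..l} (Suc N). descent_above (int W) m * multinomial_weight rate {..l} m)"

lemma atMost_eq_insert_0: "{..l} = insert 0 {1..l}"
  by auto

lemma rate_nonneg: "i \<le> l \<Longrightarrow> 0 \<le> rate i"
  using rate_down_pos rate_up_nonneg by (cases "i = 0") (auto simp: less_imp_le)

lemma descent_Suc: "i \<le> l \<Longrightarrow> descent (m(i := Suc (m i))) = descent m - displacement i"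
  unfolding descent_def by (simp add: sum.remove[of "{..l}" i] algebra_simps)

lemma sum_displacement: "(\<Sum>i\<le>l. real_of_int (displacement i) * real (m i)) = - real_of_int (descent m)"
  unfolding descent_def by simp

lemma descent_le: "m \<in> compositions {..l} n \<Longrightarrow> descent m \<le> int n"
proof -
  assume m: "m \<in> compositions {..l} n"
  have "descent m = int (m 0) - (\<Sum>i=1..l. int (jump i) * int (m i))"
    unfolding descent_def atMost_eq_insert_0 by (simp add: displacement_def)
  also have "\<dots> \<le> int (m 0)"
    by (simp add: sum_nonneg)
  also have "m 0 \<le> n"
    using compositions_le[OF _ m] by simp
  finally show ?thesis by simp
qed

text \<open>Both sides come from \<open>sum_compositions_Suc\<close>: with unit weights it gives \<open>n + 1\<close> times
  the left-hand sum, and since a step of type \<open>i\<close> lowers the descent by \<open>displacement i\<close>,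
  the correction term is exactly one more copy of it.\<close>
lemma descent_above_Suc:
  "real n * (\<Sum>m\<in>compositions {..l} (Suc n). descent_above x m * multinomial_weight rate {..l} m)
   = (\<Sum>m\<in>compositions {..l} n. multinomial_weight rate {..l} m
        * (\<Sum>i\<le>l. rate i * descent_above (x + displacement i) m))"
  (is "_ * ?X = ?Y")
proof -
  let ?W = "multinomial_weight rate {..l}"
  let ?next = "\<lambda>m i. m(i := Suc (m i))"
  define above where "above m = (if x < descent m then 1 else 0 :: real)" for m
  have total: "(\<Sum>m\<in>compositions {..l} n. ?W m * (\<Sum>i\<le>l. rate i * descent_above x (?next m i)))
      = real (Suc n) * ?X"
    using sum_compositions_Suc[where I = "{..l}" and \<beta> = rate and c = "\<lambda>_. 1" and g = "descent_above x"]
    by (simp add: sum_of_nat_composition sum_distrib_left mult_ac cong: sum.cong)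
  have signed: "(\<Sum>m\<in>compositions {..l} n. ?W m * (\<Sum>i\<le>l. rate i * displacement i * above (?next m i)))
      = - ?X"
  proof -
    have "(\<Sum>m\<in>compositions {..l} n. ?W m * (\<Sum>i\<le>l. rate i * displacement i * above (?next m i)))
        = (\<Sum>m\<in>compositions {..l} (Suc n). ?W m * above m * (\<Sum>i\<le>l. displacement i * real (m i)))"
      by (rule sum_compositions_Suc) simp
    also have "\<dots> = (\<Sum>m\<in>compositions {..l} (Suc n). - (descent_above x m * ?W m))"
      by (intro sum.cong refl) (simp add: sum_displacement above_def descent_above_def)
    finally show ?thesis by (simp add: sum_negf)
  qed
  have step: "rate i * descent_above x (?next m i)
      = rate i * descent_above (x + displacement i) m - rate i * displacement i * above (?next m i)"
    if "i \<in> {..l}" for m i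
    using that by (simp add: descent_above_def above_def descent_Suc algebra_simps)
  have "real (Suc n) * ?X
      = ?Y - (\<Sum>m\<in>compositions {..l} n. ?W m * (\<Sum>i\<le>l. rate i * displacement i * above (?next m i)))"
    unfolding total[symmetric] sum_subtractf[symmetric] right_diff_distrib[symmetric]
    by (intro sum.cong refl arg_cong2[where f = "(*)"] step)
  also have "\<dots> = ?Y + ?X"
    unfolding signed by simp
  finally show ?thesis by (simp add: algebra_simps)
qed

text \<open>For \<open>W = 0\<close> the truncated \<open>W - 1\<close> differs from \<open>-1\<close> only at descent 0, which
  contributes nothing.\<close>
lemma descent_above_pred: "descent_above (int W - 1) m = descent_above (int (W - 1)) m"
  by (cases W) (auto simp: descent_above_def)

lemma paths_to_zero_0: "paths_to_zero 0 W = (if W = 0 then 1 else 0)"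
proof -
  have unit: "descent ((\<lambda>_. 0)(i := Suc 0)) = - displacement i" if "i \<le> l" for i
    using descent_Suc[OF that, of "\<lambda>_. 0"] by (simp add: descent_def)
  have "paths_to_zero 0 W
      = 1 / rate 0 * (\<Sum>i\<in>insert 0 {1..l}. rate i * descent_above (int W) ((\<lambda>_. 0)(i := Suc 0)))"
    unfolding paths_to_zero_def atMost_eq_insert_0[symmetric]
    by (simp add: sum_compositions_1[unfolded One_nat_def])
  also have "\<dots> = 1 / rate 0 * (rate 0 * descent_above (int W) ((\<lambda>_. 0)(0 := Suc 0)))"
    using unit by (simp add: descent_above_def displacement_def)
  finally show ?thesis
    using rate_down_pos unit[of 0] by (simp add: descent_above_def displacement_def)
qed

lemma paths_to_zero_Suc:
  "paths_to_zero (Suc N) W = rate 0 * paths_to_zero N (W - 1) + (\<Sum>j=1..l. rate j * paths_to_zero N (W + jump j))"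
proof -
  let ?W = "multinomial_weight rate {..l}"
  let ?C = "compositions {..l} (Suc N)"
  have "paths_to_zero (Suc N) W = fact N / rate 0
      * (real (Suc N) * (\<Sum>m\<in>compositions {..l} (Suc (Suc N)). descent_above (int W) m * ?W m))"
    by (simp add: paths_to_zero_def fact_Suc del: of_nat_Suc)
  also have "\<dots> = fact N / rate 0 * (\<Sum>m\<in>?C. ?W m * (\<Sum>i\<le>l. rate i * descent_above (int W + displacement i) m))"
    by (simp only: descent_above_Suc)
  also have "\<dots> = fact N / rate 0 * (\<Sum>m\<in>?C. ?W m * (rate 0 * descent_above (int (W - 1)) m
      + (\<Sum>j=1..l. rate j * descent_above (int (W + jump j)) m)))"
    unfolding atMost_eq_insert_0 by (simp add: displacement_def descent_above_pred)
  also have "\<dots> = rate 0 * paths_to_zero N (W - 1) + (\<Sum>j=1..l. rate j * paths_to_zero N (W + jump j))"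
    by (simp add: paths_to_zero_def distrib_left sum.distrib sum_distrib_left sum.swap[of _ ?C] mult_ac)
  finally show ?thesis .
qed

lemma descent_above_nonneg: "0 \<le> x \<Longrightarrow> 0 \<le> descent_above x m"
  by (simp add: descent_above_def)

lemma paths_to_zero_nonneg: "0 \<le> paths_to_zero N W"
  unfolding paths_to_zero_def using rate_down_pos
  by (intro mult_nonneg_nonneg sum_nonneg descent_above_nonneg multinomial_weight_nonneg rate_nonneg) auto

lemma paths_to_zero_le: "paths_to_zero N W \<le> (\<Sum>i\<le>l. rate i) ^ Suc N / rate 0"
proof -
  let ?W = "multinomial_weight rate {..l}"
  have "(\<Sum>m\<in>compositions {..l} (Suc N). descent_above (int W) m * ?W m)
      \<le> (\<Sum>m\<in>compositions {..l} (Suc N). real (Suc N) * ?W m)"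
    using descent_le by (intro sum_mono mult_right_mono multinomial_weight_nonneg rate_nonneg)
      (fastforce simp: descent_above_def)+
  also have "\<dots> = real (Suc N) * ((\<Sum>i\<le>l. rate i) ^ Suc N / fact (Suc N))"
    by (simp add: sum_multinomial_weight flip: sum_distrib_left)
  finally have "paths_to_zero N W \<le> fact N / rate 0 * (real (Suc N) * ((\<Sum>i\<le>l. rate i) ^ Suc N / fact (Suc N)))"
    unfolding paths_to_zero_def using rate_down_pos by (intro mult_left_mono) auto
  then show ?thesis by (simp add: fact_Suc del: of_nat_Suc)
qed

definition up_displacement :: "(nat \<Rightarrow> nat) \<Rightarrow> nat" where
  "up_displacement m = (\<Sum>j=1..l. jump j * m j)"

definition with_descent :: "nat \<Rightarrow> (nat \<Rightarrow> nat) \<Rightarrow> nat \<Rightarrow> nat" where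
  "with_descent h m = m(0 := Suc h + up_displacement m)"

lemma descent_eq: "descent m = int (m 0) - int (up_displacement m)"
  unfolding descent_def up_displacement_def atMost_eq_insert_0 by (simp add: displacement_def)

lemma up_displacement_upd_0 [simp]: "up_displacement (m(0 := c)) = up_displacement m"
  unfolding up_displacement_def by (intro sum.cong) auto

lemma sum_atMost_eq: "sum m {..l} = m 0 + (\<Sum>i=1..l. m i)"
  unfolding atMost_eq_insert_0 by simp

lemma descent_with_descent: "descent (with_descent h m) = int (Suc h)"
  unfolding descent_eq with_descent_def by simp

lemma with_descent_mem:
  assumes "m \<in> compositions {1..l} w"
  shows "with_descent h m \<in> compositions {..l} (Suc (h + w + up_displacement m))"
  using assms unfolding compositions_def with_descent_def by (auto simp: sum_atMost_eq)

lemma has_sum_positive_descent_reindex: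
  "(g has_sum S) {(N, m). m \<in> compositions {..l} (Suc N) \<and> 0 < descent m}
   \<longleftrightarrow> ((\<lambda>((h, w), m). g (h + w + up_displacement m, with_descent h m)) has_sum S)
         (Sigma UNIV (\<lambda>(h, w). compositions {1..l} w))"
proof (rule has_sum_reindex_bij_witness)
  let ?P = "{(N, m). m \<in> compositions {..l} (Suc N) \<and> 0 < descent m}"
  let ?split = "\<lambda>(N, m). ((nat (descent m) - 1, Suc N - m 0), m(0 := 0))"
  let ?join = "\<lambda>((h, w), m). (h + w + up_displacement m, with_descent h m)"
  show "?split x \<in> Sigma UNIV (\<lambda>(h, w). compositions {1..l} w)" if "x \<in> ?P" for x
    using that by (auto simp: compositions_def sum_atMost_eq)
  show join_split: "?join (?split x) = x" if x_mem: "x \<in> ?P" for x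
  proof -
    obtain N m where x: "x = (N, m)" and m: "m \<in> compositions {..l} (Suc N)" and pos: "0 < descent m"
      using x_mem by force
    have "m 0 + (\<Sum>i=1..l. m i) = Suc N"
      using m by (simp add: compositions_def sum_atMost_eq)
    moreover have "nat (descent m) = m 0 - up_displacement m" "up_displacement m < m 0"
      using pos by (auto simp: descent_eq)
    ultimately show ?thesis
      unfolding x by (auto simp: with_descent_def fun_eq_iff)
  qed
  show "?join y \<in> ?P" if "y \<in> Sigma UNIV (\<lambda>(h, w). compositions {1..l} w)" for y
    using that with_descent_mem descent_with_descent by auto
  show "?split (?join y) = y" if y_mem: "y \<in> Sigma UNIV (\<lambda>(h, w). compositions {1..l} w)" for y
  proof -
    obtain h w m where y: "y = ((h, w), m)" and m: "m \<in> compositions {1..l} w"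
      using y_mem by auto
    have "m 0 = 0"
      using m by (simp add: compositions_def)
    then have "(with_descent h m)(0 := 0) = m"
      by (auto simp: with_descent_def fun_eq_iff)
    moreover have "Suc (h + w + up_displacement m) - with_descent h m 0 = w"
      by (simp add: with_descent_def)
    ultimately show ?thesis
      unfolding y by (simp add: descent_with_descent)
  qed
  show "(\<lambda>((h, w), m). g (h + w + up_displacement m, with_descent h m)) (?split x) = g x" if "x \<in> ?P" for x
    using join_split[OF that] by (simp add: case_prod_beta)
qed simp

lemma has_sum_paths_to_zero_by_descent:
  fixes x :: "nat \<Rightarrow> real"
  assumes x_nonneg: "\<And>N. 0 \<le> x N" and summable: "summable (\<lambda>N. paths_to_zero N 0 * x N)"
  shows "((\<lambda>((h, w), m). fact (h + w + up_displacement m) / rate 0 * real (Suc h)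
            * multinomial_weight rate {..l} (with_descent h m) * x (h + w + up_displacement m))
          has_sum (\<Sum>N. paths_to_zero N 0 * x N)) (Sigma UNIV (\<lambda>(h, w). compositions {1..l} w))"
proof -
  define F where "F = (\<lambda>(N, m). fact N / rate 0 * descent_above 0 m * multinomial_weight rate {..l} m * x N)"
  have "(F has_sum (\<Sum>N. paths_to_zero N 0 * x N)) (Sigma UNIV (\<lambda>N. compositions {..l} (Suc N)))"
  proof (rule has_sum_Sigma_finite_blocks[OF finite_compositions _ _ summable])
    show "0 \<le> F (N, m)" for N m
      unfolding F_def prod.case using rate_down_pos x_nonneg
      by (intro mult_nonneg_nonneg divide_nonneg_pos descent_above_nonneg multinomial_weight_nonneg rate_nonneg) auto
    show "(\<Sum>m\<in>compositions {..l} (Suc N). F (N, m)) = paths_to_zero N 0 * x N" for N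
      by (simp add: F_def paths_to_zero_def sum_distrib_left sum_distrib_right mult_ac)
  qed simp
  then have "(F has_sum (\<Sum>N. paths_to_zero N 0 * x N)) {(N, m). m \<in> compositions {..l} (Suc N) \<and> 0 < descent m}"
    by (rule has_sum_cong_neutral[THEN iffD1, rotated -1]) (auto simp: F_def descent_above_def split: if_splits)
  then show ?thesis
    unfolding has_sum_positive_descent_reindex
    by (rule has_sum_cong[THEN iffD1, rotated]) (simp add: F_def descent_above_def descent_with_descent)
qed

end

section \<open>The Erlang queue as a walk on levels\<close>

locale erlang_queue =
  fixes k l :: nat and mu :: real and lam :: "nat \<Rightarrow> real"
  assumes k_pos: "1 \<le> k" and mu_pos: "0 < mu" and lam_pos: "\<And>m. m \<in> {1..l} \<Longrightarrow> 0 < lam m"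
begin

definition step_rate :: "nat \<Rightarrow> real" where
  "step_rate i = (if i = 0 then real k * mu else lam i)"

sublocale walk: skip_free_walk l step_rate "\<lambda>j. j * k"
  using k_pos mu_pos lam_pos by unfold_locales (auto simp: step_rate_def less_imp_le)

definition unif_rate :: real where
  "unif_rate = Lam l lam + real k * mu"

lemma Lam_nonneg: "0 \<le> Lam l lam"
  unfolding Lam_def using lam_pos by (intro sum_nonneg) (auto simp: less_imp_le)

lemma unif_rate_pos: "0 < unif_rate"
  using Lam_nonneg k_pos mu_pos by (simp add: unif_rate_def add_nonneg_pos)

lemma sum_step_rate: "(\<Sum>i\<le>l. step_rate i) = unif_rate"
  unfolding walk.atMost_eq_insert_0 by (simp add: step_rate_def unif_rate_def Lam_def)

text \<open>\<open>level_state W\<close> is the state \<open>(n, s)\<close> of level \<open>W = (n - 1) k + s\<close>, the number of service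
  phases still to be completed: a batch of \<open>j\<close> arrivals raises the level by \<open>j k\<close> and a phase
  completion lowers it by one.\<close>
definition level_state :: "nat \<Rightarrow> qstate" where
  "level_state W = (if W = 0 then (0, 0) else ((W - 1) div k + 1, (W - 1) mod k + 1))"

lemma level_state_0 [simp]: "level_state 0 = (0, 0)"
  by (simp add: level_state_def)

lemma level_state_eq:
  assumes "1 \<le> n" "1 \<le> s" "s \<le> k"
  shows "level_state ((n - 1) * k + s) = (n, s)"
proof -
  have "(n - 1) * k + s - 1 = (s - 1) + k * (n - 1)"
    using assms by (simp add: mult.commute)
  moreover have "(s - 1) div k = 0" "(s - 1) mod k = s - 1"
    using assms by auto
  ultimately have "((n - 1) * k + s - 1) div k = n - 1" "((n - 1) * k + s - 1) mod k = s - 1"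
    using k_pos by auto
  then show ?thesis
    using assms by (simp add: level_state_def)
qed

lemma level_state_cases:
  assumes "1 \<le> W"
  obtains n s where "W = (n - 1) * k + s" "1 \<le> n" "1 \<le> s" "s \<le> k"
proof
  show "W = ((W - 1) div k + 1 - 1) * k + ((W - 1) mod k + 1)"
    using assms by simp
  show "(W - 1) mod k + 1 \<le> k"
    using k_pos by (simp add: Suc_le_eq)
qed auto

lemma jumps_level_state:
  "jumps k l mu lam (level_state W)
   = map (\<lambda>j. (level_state (W + j * k), lam j)) [1..<l+1]
     @ (if W = 0 then [] else [(level_state (W - 1), real k * mu)])"
proof (cases "W = 0")
  case True
  have "level_state (W + j * k) = (j, k)" if "1 \<le> j" for j
    using True level_state_eq[of j k] that k_pos by (simp add: algebra_simps)
  then show ?thesis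
    using True by (auto simp: jumps_def)
next
  case False
  then obtain n s where W: "W = (n - 1) * k + s" and ns: "1 \<le> n" "1 \<le> s" "s \<le> k"
    using level_state_cases by (metis less_one not_le)
  have "level_state W = (n, s)"
    unfolding W using ns by (rule level_state_eq)
  moreover have "level_state (W + j * k) = (n + j, s)" for j
  proof -
    have "n + j - 1 = (n - 1) + j"
      using ns by simp
    then have "W + j * k = (n + j - 1) * k + s"
      unfolding W by (simp add: add_mult_distrib)
    then show ?thesis
      using level_state_eq[of "n + j" s] ns by simp
  qed
  moreover have "level_state (W - 1) = (if 2 \<le> s then (n, s - 1) else if 2 \<le> n then (n - 1, k) else (0, 0))"
  proof -
    consider "2 \<le> s" | "s = 1" "2 \<le> n" | "s = 1" "n = 1"
      using ns by linarith
    then show ?thesis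
    proof cases
      case 1
      then show ?thesis
        using level_state_eq[of n "s - 1"] ns unfolding W by simp
    next
      case 2
      then obtain j where "n = Suc (Suc j)"
        by (metis add_2_eq_Suc le_Suc_ex)
      then show ?thesis
        using 2 level_state_eq[of "Suc j" k] k_pos unfolding W by (simp add: add.commute)
    next
      case 3
      then show ?thesis unfolding W by simp
    qed
  qed
  ultimately show ?thesis
    using False ns by (simp add: jumps_def)
qed

lemma kpow_level_state_Suc:
  "unif_rate * kpow k l mu lam (Suc N) (level_state W) y
   = real k * mu * kpow k l mu lam N (level_state (W - 1)) y
     + (\<Sum>j=1..l. lam j * kpow k l mu lam N (level_state (W + j * k)) y)"
proof -
  let ?K = "kpow k l mu lam N"
  have total: "sum_list (map snd (jumps k l mu lam (level_state W)))
      = Lam l lam + (if W = 0 then 0 else real k * mu)"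
    by (simp add: jumps_level_state o_def interv_sum_list_conv_sum_set_nat
        atLeastLessThanSuc_atLeastAtMost Lam_def del: upt_Suc)
  have "unif_rate * kpow k l mu lam (Suc N) (level_state W) y
      = unif_rate * ((1 - sum_list (map snd (jumps k l mu lam (level_state W))) / unif_rate)
            * ?K (level_state W) y
          + sum_list (map (\<lambda>(z, r). r / unif_rate * ?K z y) (jumps k l mu lam (level_state W))))"
    by (simp add: unif_rate_def Let_def)
  also have "\<dots> = (unif_rate - Lam l lam - (if W = 0 then 0 else real k * mu)) * ?K (level_state W) y
      + (\<Sum>j=1..l. lam j * ?K (level_state (W + j * k)) y)
      + (if W = 0 then 0 else real k * mu * ?K (level_state (W - 1)) y)"
    unfolding total using unif_rate_pos
    by (simp add: jumps_level_state interv_sum_list_conv_sum_set_nat atLeastLessThanSuc_atLeastAtMost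
        o_def distrib_left sum_distrib_left field_simps del: upt_Suc)
  finally show ?thesis
    by (cases "W = 0") (simp_all add: unif_rate_def)
qed

lemma kpow_level_state:
  "unif_rate ^ N * kpow k l mu lam N (level_state W) (0, 0) = walk.paths_to_zero N W"
proof (induction N arbitrary: W)
  case 0
  have "level_state W = (0, 0) \<longleftrightarrow> W = 0"
    by (simp add: level_state_def)
  then show ?case by (simp add: walk.paths_to_zero_0)
next
  case (Suc N)
  have "unif_rate ^ Suc N * kpow k l mu lam (Suc N) (level_state W) (0, 0)
      = unif_rate ^ N * (unif_rate * kpow k l mu lam (Suc N) (level_state W) (0, 0))"
    by simp
  also have "\<dots> = walk.paths_to_zero (Suc N) W"
    unfolding kpow_level_state_Suc walk.paths_to_zero_Suc
    by (simp add: Suc.IH[symmetric] step_rate_def distrib_left sum_distrib_left mult_ac)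
  finally show ?case .
qed

lemma paths_to_zero_le_unif_rate: "walk.paths_to_zero N W \<le> unif_rate / (real k * mu) * unif_rate ^ N"
  using walk.paths_to_zero_le[of N W] unfolding sum_step_rate by (simp add: step_rate_def)

lemma summable_paths_to_zero_power_series: "summable (\<lambda>N. walk.paths_to_zero N 0 / fact N * t ^ N)"
proof (rule summable_dominated_by_exp_series)
  fix N
  have "walk.paths_to_zero N 0 / fact N \<le> unif_rate / (real k * mu) * unif_rate ^ N / fact N"
    by (rule divide_right_mono[OF paths_to_zero_le_unif_rate]) simp
  then show "\<bar>walk.paths_to_zero N 0 / fact N\<bar> \<le> unif_rate / (real k * mu) * unif_rate ^ N / fact N"
    using walk.paths_to_zero_nonneg[of N 0] by simp
qed

lemma summable_paths_to_zero_laplace: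
  assumes "0 < p"
  shows "summable (\<lambda>N. walk.paths_to_zero N 0 * fact r / (unif_rate + p) ^ (N + r + 2))"
proof (rule summable_comparison_test)
  let ?b = "unif_rate + p"
  have b: "0 < ?b"
    using unif_rate_pos assms by simp
  show "summable (\<lambda>N. unif_rate / (real k * mu) * fact r / ?b ^ (r + 2) * (unif_rate / ?b) ^ N)"
    using unif_rate_pos assms by (intro summable_mult summable_geometric) simp
  have "walk.paths_to_zero N 0 * fact r / ?b ^ (N + r + 2)
      \<le> unif_rate / (real k * mu) * unif_rate ^ N * fact r / ?b ^ (N + r + 2)" for N
    using b by (intro divide_right_mono mult_right_mono paths_to_zero_le_unif_rate) auto
  then show "\<exists>N0. \<forall>N\<ge>N0. norm (walk.paths_to_zero N 0 * fact r / ?b ^ (N + r + 2))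
      \<le> unif_rate / (real k * mu) * fact r / ?b ^ (r + 2) * (unif_rate / ?b) ^ N"
    using walk.paths_to_zero_nonneg b by (auto simp: power_add power_divide mult_ac)
qed

lemma p0_eq_exp_series:
  "p0 k l mu lam t = exp (- unif_rate * t) * (\<Sum>N. walk.paths_to_zero N 0 / fact N * t ^ N)"
proof -
  have series_term: "exp (- unif_rate * t) * (unif_rate * t) ^ N / fact N * kpow k l mu lam N (0, 0) (0, 0)
      = exp (- unif_rate * t) * (walk.paths_to_zero N 0 / fact N * t ^ N)" for N
    using kpow_level_state[of N 0] by (simp add: power_mult_distrib field_simps)
  have "p0 k l mu lam t
      = (\<Sum>N. exp (- unif_rate * t) * (unif_rate * t) ^ N / fact N * kpow k l mu lam N (0, 0) (0, 0))"
    unfolding p0_def Let_def unif_rate_def ..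
  also have "\<dots> = exp (- unif_rate * t) * (\<Sum>N. walk.paths_to_zero N 0 / fact N * t ^ N)"
    unfolding series_term by (rule suminf_mult[OF summable_paths_to_zero_power_series])
  finally show ?thesis .
qed

lemma double_integral_p0_eq_series:
  assumes "0 < p"
  shows "(LINT s:{0..}|lborel. (LINT t:{0..s}|lborel.
            p0 k l mu lam t * (s - t) ^ r * exp (- unif_rate * (s - t)) * exp (- s * p)))
       = (\<Sum>N. walk.paths_to_zero N 0 * fact r / (unif_rate + p) ^ (N + r + 2))"
proof -
  have integrand: "p0 k l mu lam t * (s - t) ^ r * exp (- unif_rate * (s - t)) * exp (- s * p)
      = (\<Sum>N. walk.paths_to_zero N 0 / fact N * t ^ N) * (s - t) ^ r * exp (- (unif_rate + p) * s)" for s t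
    unfolding p0_eq_exp_series by (simp add: mult_ac flip: exp_add) (simp add: algebra_simps)
  have "(LINT s:{0..}|lborel. (LINT t:{0..s}|lborel.
            (\<Sum>N. walk.paths_to_zero N 0 / fact N * t ^ N) * (s - t) ^ r * exp (- (unif_rate + p) * s)))
       = (\<Sum>N. walk.paths_to_zero N 0 / fact N * fact N * fact r / (unif_rate + p) ^ (N + r + 2))"
    using unif_rate_pos assms summable_paths_to_zero_laplace[OF assms]
    by (intro set_integral_triangle_power_series summable_paths_to_zero_power_series)
       (simp_all add: walk.paths_to_zero_nonneg)
  then show ?thesis
    unfolding integrand by simp
qed

lemma multinomial_weight_with_descent:
  "multinomial_weight step_rate {..l} (walk.with_descent h m)
   = (real k * mu) ^ (Suc h + walk.up_displacement m) / fact (Suc h + walk.up_displacement m)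
     * (\<Prod>i=1..l. lam i ^ m i / fact (m i))"
  unfolding multinomial_weight_def walk.atMost_eq_insert_0
  by (simp add: walk.with_descent_def step_rate_def)

lemma Lam_power_times_prod:
  assumes "m \<in> comps l w"
  shows "Lam l lam ^ w * (\<Prod>i=1..l. (lam i / Lam l lam) ^ m i / fact (m i))
       = (\<Prod>i=1..l. lam i ^ m i / fact (m i))"
proof (cases "l = 0")
  case True
  then show ?thesis using assms by (simp add: comps_def)
next
  case False
  then have "0 < lam 1"
    using lam_pos by simp
  moreover have "lam 1 \<le> Lam l lam"
    unfolding Lam_def using False lam_pos by (intro member_le_sum) (auto intro: less_imp_le)
  ultimately have "0 < Lam l lam" by linarith
  have "(\<Prod>i=1..l. (lam i / Lam l lam) ^ m i / fact (m i))
      = (\<Prod>i=1..l. lam i ^ m i / fact (m i)) / (\<Prod>i=1..l. Lam l lam ^ m i)"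
    by (simp add: power_divide prod_dividef[symmetric] mult.commute)
  also have "(\<Prod>i=1..l. Lam l lam ^ m i) = Lam l lam ^ w"
    using assms by (simp add: comps_def power_sum[symmetric])
  finally show ?thesis
    using \<open>0 < Lam l lam\<close> by simp
qed

text \<open>The term of the right-hand side for \<open>(h + 1, w, m)\<close> is the term of the ballot formula for
  the step counts with \<open>h + 1\<close> net descents and arrival counts \<open>m\<close>, at \<open>N + 1 = gamma\<close>.\<close>
lemma C0_term_eq:
  assumes "m \<in> comps l w"
  shows "C0 k l mu lam (Suc h) w m * Gamma (real r + 1) / b ^ (gamma0 k l (Suc h) w m + r + 1)
       = fact (h + w + walk.up_displacement m) / step_rate 0 * real (Suc h)
         * multinomial_weight step_rate {..l} (walk.with_descent h m)
         * (fact r / b ^ (h + w + walk.up_displacement m + r + 2))"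
proof -
  define N where "N = h + w + walk.up_displacement m"
  define D where "D = Suc h + walk.up_displacement m"
  define P where "P = (\<Prod>i=1..l. lam i ^ m i / fact (m i))"
  have "walk.up_displacement m = k * (\<Sum>j=1..l. j * m j)"
    unfolding walk.up_displacement_def by (simp add: sum_distrib_left mult_ac)
  then have gamma: "gamma0 k l (Suc h) w m = Suc N"
    by (simp add: gamma0_def N_def)
  have D: "Suc N - w = D" "Suc N - w - 1 = D - 1" "Suc N - 1 = N" "Suc N + r + 1 = N + r + 2"
    by (simp_all add: N_def D_def)
  have "C0 k l mu lam (Suc h) w m
      = real (Suc h) * (Lam l lam ^ w * (\<Prod>i=1..l. (lam i / Lam l lam) ^ m i / fact (m i)))
        * (real k * mu) ^ (D - 1) / fact D * fact N"
    unfolding C0_def Let_def gamma D by (simp add: mult_ac)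
  also have "\<dots> = real (Suc h) * P * ((real k * mu) ^ D / (real k * mu)) / fact D * fact N"
    unfolding Lam_power_times_prod[OF assms] P_def[symmetric]
    using k_pos mu_pos by (simp add: D_def)
  finally have C0: "C0 k l mu lam (Suc h) w m
      = real (Suc h) * P * ((real k * mu) ^ D / (real k * mu)) / fact D * fact N" .
  have "Gamma (real r + 1) = fact r"
    using Gamma_fact[of r] by (simp add: add.commute)
  then show ?thesis
    unfolding C0 gamma D multinomial_weight_with_descent N_def[symmetric] D_def[symmetric] P_def[symmetric]
    by (simp add: step_rate_def)
qed

lemma series_C0_eq_series:
  assumes "0 < p"
  shows "(\<Sum>h. \<Sum>w. \<Sum>m\<in>comps l w. C0 k l mu lam (Suc h) w m * Gamma (real r + 1)
            / (unif_rate + p) ^ (gamma0 k l (Suc h) w m + r + 1))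
       = (\<Sum>N. walk.paths_to_zero N 0 * fact r / (unif_rate + p) ^ (N + r + 2))"
proof -
  let ?x = "\<lambda>N. fact r / (unif_rate + p) ^ (N + r + 2)"
  have "((\<lambda>((h, w), m). fact (h + w + walk.up_displacement m) / step_rate 0 * real (Suc h)
            * multinomial_weight step_rate {..l} (walk.with_descent h m) * ?x (h + w + walk.up_displacement m))
          has_sum (\<Sum>N. walk.paths_to_zero N 0 * ?x N)) (Sigma UNIV (\<lambda>(h, w). compositions {1..l} w))"
    using unif_rate_pos assms summable_paths_to_zero_laplace[OF assms]
    by (intro walk.has_sum_paths_to_zero_by_descent) (simp_all add: mult_ac)
  then have "((\<lambda>((h, w), m). C0 k l mu lam (Suc h) w m * Gamma (real r + 1)
            / (unif_rate + p) ^ (gamma0 k l (Suc h) w m + r + 1))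
          has_sum (\<Sum>N. walk.paths_to_zero N 0 * ?x N)) (Sigma UNIV (\<lambda>(h, w). comps l w))"
    unfolding comps_eq_compositions
  proof (rule has_sum_cong[THEN iffD1, rotated])
    fix y :: "(nat \<times> nat) \<times> (nat \<Rightarrow> nat)"
    assume "y \<in> Sigma UNIV (\<lambda>(h, w). compositions {1..l} w)"
    then obtain h w m where y: "y = ((h, w), m)" and m: "m \<in> comps l w"
      by (auto simp: comps_eq_compositions)
    show "(\<lambda>((h, w), m). fact (h + w + walk.up_displacement m) / step_rate 0 * real (Suc h)
            * multinomial_weight step_rate {..l} (walk.with_descent h m) * ?x (h + w + walk.up_displacement m)) y
        = (\<lambda>((h, w), m). C0 k l mu lam (Suc h) w m * Gamma (real r + 1)
            / (unif_rate + p) ^ (gamma0 k l (Suc h) w m + r + 1)) y"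
      unfolding y using C0_term_eq[OF m, of h r "unif_rate + p"] by simp
  qed
  from iterated_suminf_eq_has_sum[OF this] show ?thesis
    by (simp add: comps_eq_compositions finite_compositions)
qed

end

theorem lemma3p1:
  fixes k l r :: nat and mu theta alpha z :: real and lam :: "nat \<Rightarrow> real"
  assumes "k \<ge> 1" and "l \<ge> 1" and "mu > 0" and "\<forall>m\<in>{1..l}. lam m > 0"
    and "theta > 0" and "0 < alpha" and "alpha < 1" and "z > 0"
  shows "(LINT s:{0..}|lborel. (LINT t:{0..s}|lborel.
            p0 k l mu lam t * (s - t) ^ r * exp (- (Lam l lam + real k * mu) * (s - t))
            * exp (- s * psi theta alpha z)))
       = (\<Sum>h. \<Sum>w. \<Sum>m\<in>comps l w.
            C0 k l mu lam (Suc h) w m * Gamma (real r + 1)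
            / (Lam l lam + real k * mu + psi theta alpha z) ^ (gamma0 k l (Suc h) w m + r + 1))"
proof -
  interpret erlang_queue k l mu lam
    using assms by unfold_locales auto
  have "0 < psi theta alpha z"
    unfolding psi_def using assms by (simp add: powr_less_mono2)
  then show ?thesis
    using double_integral_p0_eq_series series_C0_eq_series unfolding unif_rate_def by simp
qed

end
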